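(* Let $T\ge1$, let the label set be $\{0,1\}^T$ (so $k=2^T$, identified with $\{1,\dots,k\}$), and let $L_{Ham,T}(\hat y,y)=\frac1T\sum_{t=1}^T[\hat y_t\ne y_t]$ be the normalized Hamming loss, with quadratic surrogate $\Phi_{quad}(f,y)=\frac1{2k}\|f+L_{Ham,T}(:,y)\|_2^2$. If the scores are constrained to the column space $\mathcal{F}_{Ham,T}=\mathrm{span}(L_{Ham,T})$, then $$H_{\Phi_{quad},L_{Ham,T},\mathcal{F}_{Ham,T}}(\varepsilon)=\frac{\varepsilon^2}{8T},\qquad0\le\varepsilon\le1.$$
   Context: $\mathrm{pred}(f)$ is the smallest index maximizing $f_c$ (under the fixed identification of labels with $\{1,\dots,k\}$). For $q\in\Delta_k$: $\ell(f,q)=\sum_cq_cL(\mathrm{pred}(f),c)$, $\phi(f,q)=\sum_cq_c\Phi(f,c)$, $\delta\ell(f,q)=\ell(f,q)-\inf_{\hat f\in\mathcal{F}}\ell(\hat f,q)$, $\delta\phi(f,q)=\phi(f,q)-\inf_{\hat f\in\mathcal{F}}\phi(\hat f,q)$; calibration function $H_{\Phi,L,\mathcal{F}}(\varepsilon)=\inf\{\delta\phi(f,q):f\in\mathcal{F},q\in\Delta_k,\delta\ell(f,q)\ge\varepsilon\}$ ($+\infty$ if empty). *)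

theory Defs
  imports "HOL-Analysis.Analysis"
begin

text \<open>Generic setting: labels are identified with the indices 0,...,k-1.
  A score vector is a function nat => real (only indices below k matter).
  L c c' is the loss of predicting c when the true label is c'.\<close>

definition pred :: "nat \<Rightarrow> (nat \<Rightarrow> real) \<Rightarrow> nat" where
  "pred k f = (LEAST c. c < k \<and> (\<forall>c'<k. f c' \<le> f c))"

definition prob_simplex :: "nat \<Rightarrow> (nat \<Rightarrow> real) set" where
  "prob_simplex k = {q. (\<forall>c<k. 0 \<le> q c) \<and> (\<Sum>c<k. q c) = 1}"

definition task_loss :: "nat \<Rightarrow> (nat \<Rightarrow> nat \<Rightarrow> real) \<Rightarrow> (nat \<Rightarrow> real) \<Rightarrow> (nat \<Rightarrow> real) \<Rightarrow> real" where
  "task_loss k L f q = (\<Sum>c<k. q c * L (pred k f) c)"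

definition surr_loss :: "nat \<Rightarrow> ((nat \<Rightarrow> real) \<Rightarrow> nat \<Rightarrow> real) \<Rightarrow> (nat \<Rightarrow> real) \<Rightarrow> (nat \<Rightarrow> real) \<Rightarrow> real" where
  "surr_loss k \<Phi> f q = (\<Sum>c<k. q c * \<Phi> f c)"

definition excess_task_loss where
  "excess_task_loss k L F f q = task_loss k L f q - (INF g\<in>F. task_loss k L g q)"

definition excess_surr_loss where
  "excess_surr_loss k \<Phi> F f q = surr_loss k \<Phi> f q - (INF g\<in>F. surr_loss k \<Phi> g q)"

text \<open>Calibration function; the infimum of the empty set in ereal is +infinity.\<close>
definition calibration_function ::
  "nat \<Rightarrow> ((nat \<Rightarrow> real) \<Rightarrow> nat \<Rightarrow> real) \<Rightarrow> (nat \<Rightarrow> nat \<Rightarrow> real) \<Rightarrow> (nat \<Rightarrow> real) set \<Rightarrow> real \<Rightarrow> ereal" where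
  "calibration_function k \<Phi> L F \<epsilon> =
     Inf {ereal (excess_surr_loss k \<Phi> F f q) | f q.
            f \<in> F \<and> q \<in> prob_simplex k \<and> excess_task_loss k L F f q \<ge> \<epsilon>}"

definition quad_surrogate :: "nat \<Rightarrow> (nat \<Rightarrow> nat \<Rightarrow> real) \<Rightarrow> (nat \<Rightarrow> real) \<Rightarrow> nat \<Rightarrow> real" where
  "quad_surrogate k L f y = (1 / (2 * real k)) * (\<Sum>c<k. (f c + L c y)\<^sup>2)"

definition loss_col_span :: "nat \<Rightarrow> (nat \<Rightarrow> nat \<Rightarrow> real) \<Rightarrow> (nat \<Rightarrow> real) set" where
  "loss_col_span k L = {f. \<exists>\<alpha> :: nat \<Rightarrow> real.
      f = (\<lambda>c. if c < k then (\<Sum>y<k. \<alpha> y * L c y) else 0)}"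

text \<open>Normalized Hamming loss on {0,1}^T, with labels identified with {0..<2^T} via lab.\<close>
definition hamming_loss :: "nat \<Rightarrow> (nat \<Rightarrow> bool list) \<Rightarrow> nat \<Rightarrow> nat \<Rightarrow> real" where
  "hamming_loss T lab c c' = real (card {t. t < T \<and> lab c ! t \<noteq> lab c' ! t}) / real T"

end

theory Submission imports Defs begin

text \<open>Write s_t(y) = \<plusminus>1 for the t-th bit of the label y. The Hamming loss is
  1/2 - (1/2T) \<Sum>_t s_t(c) s_t(y), so the column span consists of the scores
  b_0 + \<Sum>_t b_t s_t that are affine in the spins, and the conditional risk of q is
  1/2 - \<Sum>_t n_t s_t with n_t = (\<Sum>_y q_y s_t(y)) / 2T. As the spins are orthogonal,
  each of squared norm 2^T, the excess surrogate of such a score is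
  ((b_0 + 1/2)^2 + \<Sum>_t (b_t - n_t)^2) / 2. A maximizer p of the score satisfies
  b_t s_t(p) \<ge> 0 for every t, since flipping bit t of p changes the score by -2 b_t s_t(p).
  Hence the excess task loss is at most \<Sum>_t (|n_t| - n_t s_t(p)), a sum of T terms each
  at most 2 |b_t - n_t|, and Cauchy-Schwarz gives \<epsilon>^2 \<le> 4T \<Sum>_t (b_t - n_t)^2.
  Equality holds for the constant score -1/2 against the distribution putting weights
  (1 - \<epsilon>)/2 and (1 + \<epsilon>)/2 on two complementary labels.\<close>

lemma pred_argmax:
  assumes "0 < k"
  shows "pred k f < k" and "\<forall>c<k. f c \<le> f (pred k f)"
proof -
  have "Max (f ` {..<k}) \<in> f ` {..<k}" using assms by (intro Max_in) auto
  then obtain c0 where c0: "c0 < k" "f c0 = Max (f ` {..<k})" by auto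
  then have "c0 < k \<and> (\<forall>c<k. f c \<le> f c0)" by auto
  then have "pred k f < k \<and> (\<forall>c<k. f c \<le> f (pred k f))"
    unfolding pred_def by (rule LeastI)
  then show "pred k f < k" and "\<forall>c<k. f c \<le> f (pred k f)" by auto
qed

definition cond_risk :: "nat \<Rightarrow> (nat \<Rightarrow> nat \<Rightarrow> real) \<Rightarrow> (nat \<Rightarrow> real) \<Rightarrow> nat \<Rightarrow> real" where
  "cond_risk k L q c = (\<Sum>y<k. q y * L c y)"

definition bayes_score :: "nat \<Rightarrow> (nat \<Rightarrow> nat \<Rightarrow> real) \<Rightarrow> (nat \<Rightarrow> real) \<Rightarrow> nat \<Rightarrow> real" where
  "bayes_score k L q c = (if c < k then - cond_risk k L q c else 0)"

lemma task_loss_eq_cond_risk: "task_loss k L f q = cond_risk k L q (pred k f)"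
  unfolding task_loss_def cond_risk_def by simp

lemma bayes_score_in_loss_col_span: "bayes_score k L q \<in> loss_col_span k L"
  unfolding loss_col_span_def bayes_score_def cond_risk_def
  by (auto intro!: exI[of _ "\<lambda>y. - q y"] simp: sum_negf fun_eq_iff)

lemma surr_loss_quad_surrogate:
  assumes q1: "(\<Sum>y<k. q y) = 1"
  shows "surr_loss k (quad_surrogate k L) f q =
     (\<Sum>c<k. (f c + cond_risk k L q c)\<^sup>2) / (2 * real k)
     + ((\<Sum>y<k. q y * (\<Sum>c<k. (L c y)\<^sup>2)) - (\<Sum>c<k. (cond_risk k L q c)\<^sup>2)) / (2 * real k)"
proof -
  have cross: "(\<Sum>y<k. q y * (\<Sum>c<k. f c * L c y)) = (\<Sum>c<k. f c * cond_risk k L q c)"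
    unfolding cond_risk_def sum_distrib_left
    by (subst sum.swap) (simp add: mult_ac)
  have per_label: "(\<Sum>c<k. (f c + L c y)\<^sup>2)
      = (\<Sum>c<k. (f c)\<^sup>2) + 2 * (\<Sum>c<k. f c * L c y) + (\<Sum>c<k. (L c y)\<^sup>2)" for y
    by (simp add: power2_sum sum.distrib sum_distrib_left mult_ac)
  have "surr_loss k (quad_surrogate k L) f q = (\<Sum>y<k. q y * (\<Sum>c<k. (f c + L c y)\<^sup>2)) / (2 * real k)"
    unfolding surr_loss_def quad_surrogate_def sum_divide_distrib by simp
  also have "(\<Sum>y<k. q y * (\<Sum>c<k. (f c + L c y)\<^sup>2))
      = (\<Sum>c<k. (f c)\<^sup>2) * (\<Sum>y<k. q y) + 2 * (\<Sum>y<k. q y * (\<Sum>c<k. f c * L c y))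
        + (\<Sum>y<k. q y * (\<Sum>c<k. (L c y)\<^sup>2))"
    unfolding per_label distrib_left sum.distrib
    by (simp add: sum_distrib_right[symmetric] sum_distrib_left[symmetric])
       (simp add: sum_distrib_left mult_ac)
  also have "\<dots> = (\<Sum>c<k. (f c + cond_risk k L q c)\<^sup>2)
      + ((\<Sum>y<k. q y * (\<Sum>c<k. (L c y)\<^sup>2)) - (\<Sum>c<k. (cond_risk k L q c)\<^sup>2))"
    unfolding q1 cross by (simp add: power2_sum sum.distrib mult.assoc flip: sum_distrib_left)
  finally show ?thesis by (simp add: add_divide_distrib)
qed

lemma excess_surr_loss_quad_surrogate:
  assumes q1: "(\<Sum>y<k. q y) = 1" and bayes: "bayes_score k L q \<in> F"
  shows "excess_surr_loss k (quad_surrogate k L) F f q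
           = (\<Sum>c<k. (f c + cond_risk k L q c)\<^sup>2) / (2 * real k)"
proof -
  define R where "R = ((\<Sum>y<k. q y * (\<Sum>c<k. (L c y)\<^sup>2)) - (\<Sum>c<k. (cond_risk k L q c)\<^sup>2)) / (2 * real k)"
  have "(INF g\<in>F. surr_loss k (quad_surrogate k L) g q) = R"
  proof (rule cInf_eq_minimum)
    have "surr_loss k (quad_surrogate k L) (bayes_score k L q) q = R"
      unfolding surr_loss_quad_surrogate[OF q1] R_def by (simp add: bayes_score_def)
    then show "R \<in> (\<lambda>g. surr_loss k (quad_surrogate k L) g q) ` F"
      using bayes by force
  next
    fix x assume "x \<in> (\<lambda>g. surr_loss k (quad_surrogate k L) g q) ` F"
    then obtain g where "x = surr_loss k (quad_surrogate k L) g q" by auto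
    moreover have "0 \<le> (\<Sum>c<k. (g c + cond_risk k L q c)\<^sup>2) / (2 * real k)"
      by (intro divide_nonneg_nonneg sum_nonneg) auto
    ultimately show "R \<le> x" unfolding surr_loss_quad_surrogate[OF q1] R_def by simp
  qed
  then show ?thesis
    unfolding excess_surr_loss_def surr_loss_quad_surrogate[OF q1] R_def by simp
qed

lemma excess_task_loss_eq_cond_risk:
  assumes "0 < k" and bayes: "bayes_score k L q \<in> F"
  shows "excess_task_loss k L F f q
           = cond_risk k L q (pred k f) - Min (cond_risk k L q ` {..<k})"
proof -
  let ?p = "pred k (bayes_score k L q)"
  have fin: "finite (cond_risk k L q ` {..<k})" "cond_risk k L q ` {..<k} \<noteq> {}"
    using assms(1) by auto
  have min_at_p: "cond_risk k L q ?p = Min (cond_risk k L q ` {..<k})"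
    using pred_argmax[OF assms(1), of "bayes_score k L q"]
    by (intro Min_eqI[symmetric] fin) (auto simp: bayes_score_def)
  have "(INF g\<in>F. task_loss k L g q) = Min (cond_risk k L q ` {..<k})"
  proof (rule cInf_eq_minimum)
    show "Min (cond_risk k L q ` {..<k}) \<in> (\<lambda>g. task_loss k L g q) ` F"
      using bayes min_at_p by (force simp: task_loss_eq_cond_risk)
  next
    fix x assume "x \<in> (\<lambda>g. task_loss k L g q) ` F"
    then obtain g where "x = cond_risk k L q (pred k g)"
      by (auto simp: task_loss_eq_cond_risk)
    then show "Min (cond_risk k L q ` {..<k}) \<le> x"
      using pred_argmax(1)[OF assms(1), of g] fin by simp
  qed
  then show ?thesis
    unfolding excess_task_loss_def task_loss_eq_cond_risk by simp
qed

lemma sum_sq_bound_of_sum_bound: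
  fixes w d :: "nat \<Rightarrow> real"
  assumes "0 \<le> \<epsilon>" and "\<epsilon> \<le> (\<Sum>t<T. w t)"
    and "\<And>t. t < T \<Longrightarrow> 0 \<le> w t \<and> w t \<le> 2 * \<bar>d t\<bar>"
  shows "\<epsilon>\<^sup>2 \<le> 4 * real T * (\<Sum>t<T. (d t)\<^sup>2)"
proof -
  have "\<epsilon>\<^sup>2 \<le> (\<Sum>t<T. w t)\<^sup>2"
    using assms(1,2) by (intro power_mono) auto
  also have "\<dots> \<le> real T * (\<Sum>t<T. (w t)\<^sup>2)"
    using Cauchy_Schwarz_ineq_sum[of "\<lambda>_. 1" w "{..<T}"] by simp
  also have "\<dots> \<le> real T * (\<Sum>t<T. (2 * \<bar>d t\<bar>)\<^sup>2)"
    using assms(3) by (intro mult_left_mono sum_mono power_mono) auto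
  also have "\<dots> = 4 * real T * (\<Sum>t<T. (d t)\<^sup>2)"
    by (simp add: power_mult_distrib sum_distrib_left mult_ac)
  finally show ?thesis .
qed

definition spin :: "nat \<Rightarrow> bool list \<Rightarrow> real" where
  "spin t xs = (if xs ! t then 1 else -1)"

lemma spin_cases: "spin t xs = 1 \<or> spin t xs = -1"
  by (simp add: spin_def)

lemma spin_mult_self [simp]: "spin t xs * spin t xs = 1"
  by (simp add: spin_def)

lemma hamming_loss_spin:
  "hamming_loss T lab c y = (\<Sum>t<T. 1 - spin t (lab c) * spin t (lab y)) / (2 * real T)"
proof -
  have "(\<Sum>t<T. 1 - spin t (lab c) * spin t (lab y)) / 2
      = (\<Sum>t<T. if lab c ! t \<noteq> lab y ! t then 1 else 0)"
    unfolding sum_divide_distrib by (intro sum.cong) (auto simp: spin_def)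
  also have "\<dots> = real (card {t. t < T \<and> lab c ! t \<noteq> lab y ! t})"
    by (simp add: sum.If_cases Collect_conj_eq lessThan_def Int_commute)
  finally show ?thesis
    unfolding hamming_loss_def by (simp add: divide_divide_eq_left[symmetric])
qed

lemma sum_zero_if_bij_negates:
  fixes F :: "'a \<Rightarrow> real"
  assumes "bij_betw g S S" and "\<And>x. x \<in> S \<Longrightarrow> F (g x) = - F x"
  shows "sum F S = 0"
proof -
  have "sum F S = sum (F \<circ> g) S" using sum.reindex_bij_betw[OF assms(1), of F] by simp
  also have "\<dots> = - sum F S" using assms(2) by (simp add: sum_negf)
  finally show ?thesis by simp
qed

lemma bij_betw_flip_bit:
  assumes "t < T"
  shows "bij_betw (\<lambda>xs. xs[t := \<not> xs ! t]) {xs. length xs = T} {xs. length xs = T}"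
  by (rule bij_betw_byWitness[where f'="\<lambda>xs. xs[t := \<not> xs ! t]"]) (auto simp: assms)

lemma sum_spin_lists: "t < T \<Longrightarrow> (\<Sum>xs | length xs = T. spin t xs) = 0"
  by (rule sum_zero_if_bij_negates[OF bij_betw_flip_bit]) (auto simp: spin_def)

lemma sum_spin_mult_lists:
  "t < T \<Longrightarrow> s \<noteq> t \<Longrightarrow> (\<Sum>xs | length xs = T. spin s xs * spin t xs) = 0"
  by (rule sum_zero_if_bij_negates[OF bij_betw_flip_bit]) (auto simp: spin_def)

locale binary_labelling =
  fixes T :: nat and lab :: "nat \<Rightarrow> bool list"
  assumes T_pos: "1 \<le> T"
    and lab_bij: "bij_betw lab {..<2^T} {xs. length xs = T}"
begin

abbreviation L_ham :: "nat \<Rightarrow> nat \<Rightarrow> real" where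
  "L_ham \<equiv> hamming_loss T lab"

abbreviation F_ham :: "(nat \<Rightarrow> real) set" where
  "F_ham \<equiv> loss_col_span (2^T) L_ham"

lemma length_lab: "c < 2^T \<Longrightarrow> length (lab c) = T"
  using bij_betwE[OF lab_bij] by auto

lemma lab_surj: "length xs = T \<Longrightarrow> \<exists>c<2^T. lab c = xs"
  using bij_betw_imp_surj_on[OF lab_bij] by (metis (mono_tags, lifting) imageE lessThan_iff mem_Collect_eq)

lemma sum_labels: "(\<Sum>c<2^T. G (lab c)) = (\<Sum>xs | length xs = T. G xs)"
  using sum.reindex_bij_betw[OF lab_bij, of G] by simp

lemma sum_spin_labels: "t < T \<Longrightarrow> (\<Sum>c<2^T. spin t (lab c)) = 0"
  using sum_labels[of "spin t"] sum_spin_lists by simp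

lemma sum_spin_mult_labels:
  "s < T \<Longrightarrow> t < T \<Longrightarrow> (\<Sum>c<2^T. spin s (lab c) * spin t (lab c)) = (if s = t then 2^T else 0)"
  using sum_labels[of "\<lambda>xs. spin s xs * spin t xs"] sum_spin_mult_lists[of t T s] by auto

lemma sum_sq_affine_spin:
  "(\<Sum>c<2^T. (d0 + (\<Sum>t<T. d t * spin t (lab c)))\<^sup>2) = 2^T * (d0\<^sup>2 + (\<Sum>t<T. (d t)\<^sup>2))"
proof -
  have linear: "(\<Sum>c<2^T. \<Sum>t<T. d t * spin t (lab c)) = 0"
    by (subst sum.swap) (simp add: sum_distrib_left[symmetric] sum_spin_labels)
  have "(\<Sum>c<2^T. (\<Sum>t<T. d t * spin t (lab c))\<^sup>2)
      = (\<Sum>c<2^T. \<Sum>s<T. \<Sum>t<T. d s * d t * (spin s (lab c) * spin t (lab c)))"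
    by (simp add: power2_eq_square sum_product mult_ac)
  also have "\<dots> = (\<Sum>s<T. \<Sum>c<2^T. \<Sum>t<T. d s * d t * (spin s (lab c) * spin t (lab c)))"
    by (rule sum.swap)
  also have "\<dots> = (\<Sum>s<T. \<Sum>t<T. \<Sum>c<2^T. d s * d t * (spin s (lab c) * spin t (lab c)))"
    by (rule sum.cong[OF refl], rule sum.swap)
  also have "\<dots> = (\<Sum>s<T. \<Sum>t<T. d s * d t * (\<Sum>c<2^T. spin s (lab c) * spin t (lab c)))"
    by (simp add: sum_distrib_left)
  also have "\<dots> = 2^T * (\<Sum>t<T. (d t)\<^sup>2)"
    by (simp add: sum_spin_mult_labels if_distrib sum_distrib_left power2_eq_square mult_ac cong: if_cong)
  finally have quadratic: "(\<Sum>c<2^T. (\<Sum>t<T. d t * spin t (lab c))\<^sup>2) = 2^T * (\<Sum>t<T. (d t)\<^sup>2)" .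
  show ?thesis
    by (simp add: power2_sum sum.distrib sum_distrib_left[symmetric] mult.assoc linear quadratic
                  distrib_left)
qed

definition risk_coeff :: "(nat \<Rightarrow> real) \<Rightarrow> nat \<Rightarrow> real" where
  "risk_coeff q t = (\<Sum>y<2^T. q y * spin t (lab y)) / (2 * real T)"

lemma cond_risk_hamming:
  "cond_risk (2^T) L_ham q c = (\<Sum>y<2^T. q y) / 2 - (\<Sum>t<T. risk_coeff q t * spin t (lab c))"
proof -
  have T0: "real T \<noteq> 0" using T_pos by simp
  have per_label: "q y * L_ham c y
      = (\<Sum>t<T. q y / (2 * real T) - spin t (lab c) * (q y * spin t (lab y)) / (2 * real T))" for y
    unfolding hamming_loss_spin times_divide_eq_right sum_distrib_left sum_divide_distrib
    by (intro sum.cong refl) (simp add: algebra_simps diff_divide_distrib)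
  have "cond_risk (2^T) L_ham q c
      = (\<Sum>t<T. \<Sum>y<2^T. q y / (2 * real T) - spin t (lab c) * (q y * spin t (lab y)) / (2 * real T))"
    unfolding cond_risk_def per_label by (rule sum.swap)
  also have "\<dots> = (\<Sum>t<T. (\<Sum>y<2^T. q y) / (2 * real T) - risk_coeff q t * spin t (lab c))"
    unfolding risk_coeff_def sum_subtractf sum_divide_distrib[symmetric] times_divide_eq_left
    by (simp add: sum_distrib_left mult_ac)
  also have "\<dots> = (\<Sum>y<2^T. q y) / 2 - (\<Sum>t<T. risk_coeff q t * spin t (lab c))"
    using T0 by (simp add: sum_subtractf)
  finally show ?thesis .
qed

lemma loss_col_span_affine_spin:
  assumes "f \<in> F_ham"
  obtains b0 b where "\<And>c. c < 2^T \<Longrightarrow> f c = b0 + (\<Sum>t<T. b t * spin t (lab c))"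
proof -
  obtain \<alpha> where "f = (\<lambda>c. if c < 2^T then cond_risk (2^T) L_ham \<alpha> c else 0)"
    using assms unfolding loss_col_span_def cond_risk_def by auto
  then have "f c = (\<Sum>y<2^T. \<alpha> y) / 2 + (\<Sum>t<T. - risk_coeff \<alpha> t * spin t (lab c))"
    if "c < 2^T" for c
    using that by (simp add: cond_risk_hamming sum_negf)
  then show ?thesis by (rule that)
qed

lemma const_in_loss_col_span: "(\<lambda>c. if c < 2^T then a else 0) \<in> F_ham"
proof -
  define \<alpha> where "\<alpha> = (\<lambda>y::nat. 2 * a / 2^T)"
  have "(\<Sum>y<2^T. \<alpha> y * spin t (lab y)) = 2 * a / 2^T * (\<Sum>y<2^T. spin t (lab y))" for t
    by (simp add: \<alpha>_def sum_distrib_left)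
  then have "risk_coeff \<alpha> t = 0" if "t < T" for t
    using sum_spin_labels[OF that] by (simp add: risk_coeff_def)
  then have "cond_risk (2^T) L_ham \<alpha> c = a" for c
    by (simp add: cond_risk_hamming \<alpha>_def)
  then show ?thesis
    unfolding loss_col_span_def cond_risk_def[symmetric]
    by (intro CollectI exI[of _ \<alpha>]) (simp add: fun_eq_iff)
qed

lemma argmax_spin_sign:
  assumes f: "\<And>c. c < 2^T \<Longrightarrow> f c = b0 + (\<Sum>s<T. b s * spin s (lab c))"
    and p: "p < 2^T" "\<forall>c<2^T. f c \<le> f p" and t: "t < T"
  shows "0 \<le> b t * spin t (lab p)"
proof -
  have lp: "length (lab p) = T" using length_lab p(1) by simp
  obtain c where c: "c < 2^T" "lab c = (lab p)[t := \<not> lab p ! t]"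
    using lab_surj[of "(lab p)[t := \<not> lab p ! t]"] lp by auto
  have "(\<Sum>s<T. b s * spin s (lab c))
      = (\<Sum>s<T. b s * spin s (lab p) - (if s = t then 2 * (b t * spin t (lab p)) else 0))"
    by (intro sum.cong) (auto simp: c(2) lp spin_def nth_list_update)
  also have "\<dots> = (\<Sum>s<T. b s * spin s (lab p)) - 2 * (b t * spin t (lab p))"
    using t by (simp add: sum_subtractf)
  finally have "f c = f p - 2 * (b t * spin t (lab p))"
    using f c(1) p(1) by simp
  with p(2) c(1) show ?thesis by fastforce
qed

lemma excess_surr_loss_hamming:
  assumes q: "q \<in> prob_simplex (2^T)"
    and f: "\<And>c. c < 2^T \<Longrightarrow> f c = b0 + (\<Sum>t<T. b t * spin t (lab c))"
  shows "excess_surr_loss (2^T) (quad_surrogate (2^T) L_ham) F_ham f q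
           = ((b0 + 1/2)\<^sup>2 + (\<Sum>t<T. (b t - risk_coeff q t)\<^sup>2)) / 2"
proof -
  have q1: "(\<Sum>y<2^T. q y) = 1" using q by (simp add: prob_simplex_def)
  have "(\<Sum>c<2^T. (f c + cond_risk (2^T) L_ham q c)\<^sup>2)
      = (\<Sum>c<2^T. ((b0 + 1/2) + (\<Sum>t<T. (b t - risk_coeff q t) * spin t (lab c)))\<^sup>2)"
    by (intro sum.cong refl) (simp add: f cond_risk_hamming q1 left_diff_distrib sum_subtractf algebra_simps)
  also have "\<dots> = 2^T * ((b0 + 1/2)\<^sup>2 + (\<Sum>t<T. (b t - risk_coeff q t)\<^sup>2))"
    by (rule sum_sq_affine_spin)
  finally show ?thesis
    using excess_surr_loss_quad_surrogate[OF q1 bayes_score_in_loss_col_span] by simp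
qed

lemma excess_task_loss_hamming_le:
  assumes q: "q \<in> prob_simplex (2^T)"
  shows "excess_task_loss (2^T) L_ham F_ham f q
           \<le> (\<Sum>t<T. \<bar>risk_coeff q t\<bar> - risk_coeff q t * spin t (lab (pred (2^T) f)))"
proof -
  let ?r = "cond_risk (2^T) L_ham q"
  let ?n = "risk_coeff q"
  have "Min (?r ` {..<2^T}) \<in> ?r ` {..<2^T}"
    by (intro Min_in) (auto simp: lessThan_empty_iff)
  then obtain m where m: "Min (?r ` {..<2^T}) = ?r m" by auto
  have "excess_task_loss (2^T) L_ham F_ham f q = ?r (pred (2^T) f) - ?r m"
    using excess_task_loss_eq_cond_risk[OF _ bayes_score_in_loss_col_span] m by simp
  also have "\<dots> = (\<Sum>t<T. ?n t * spin t (lab m) - ?n t * spin t (lab (pred (2^T) f)))"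
    by (simp add: cond_risk_hamming sum_subtractf)
  also have "\<dots> \<le> (\<Sum>t<T. \<bar>?n t\<bar> - ?n t * spin t (lab (pred (2^T) f)))"
  proof (intro sum_mono diff_right_mono)
    show "?n t * spin t (lab m) \<le> \<bar>?n t\<bar>" for t
      using spin_cases[of t "lab m"] by auto
  qed
  finally show ?thesis .
qed

lemma calibration_lower_bound:
  assumes f: "f \<in> F_ham" and q: "q \<in> prob_simplex (2^T)" and "0 \<le> \<epsilon>"
    and \<epsilon>: "\<epsilon> \<le> excess_task_loss (2^T) L_ham F_ham f q"
  shows "\<epsilon>\<^sup>2 / (8 * real T) \<le> excess_surr_loss (2^T) (quad_surrogate (2^T) L_ham) F_ham f q"
proof -
  obtain b0 b where fb: "\<And>c. c < 2^T \<Longrightarrow> f c = b0 + (\<Sum>t<T. b t * spin t (lab c))"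
    using loss_col_span_affine_spin[OF f] by blast
  define p where "p = pred (2^T) f"
  have p: "p < 2^T" "\<forall>c<2^T. f c \<le> f p"
    using pred_argmax[of "2^T" f] by (simp_all add: p_def)
  define n where "n = risk_coeff q"
  define w where "w t = \<bar>n t\<bar> - n t * spin t (lab p)" for t
  have "\<epsilon> \<le> (\<Sum>t<T. w t)"
    using \<epsilon> excess_task_loss_hamming_le[OF q, of f] by (simp add: w_def n_def p_def)
  moreover have "0 \<le> w t \<and> w t \<le> 2 * \<bar>b t - n t\<bar>" if "t < T" for t
    using spin_cases[of t "lab p"] argmax_spin_sign[OF fb p that]
    by (auto simp: w_def abs_if)
  ultimately have "\<epsilon>\<^sup>2 \<le> 4 * real T * (\<Sum>t<T. (b t - n t)\<^sup>2)"
    using \<open>0 \<le> \<epsilon>\<close> by (intro sum_sq_bound_of_sum_bound) auto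
  then have "\<epsilon>\<^sup>2 / (8 * real T) \<le> (\<Sum>t<T. (b t - n t)\<^sup>2) / 2"
    using T_pos by (simp add: field_simps)
  also have "\<dots> \<le> ((b0 + 1/2)\<^sup>2 + (\<Sum>t<T. (b t - n t)\<^sup>2)) / 2"
    by simp
  finally show ?thesis
    using excess_surr_loss_hamming[OF q fb] by (simp add: n_def)
qed

lemma complement_label:
  assumes "c < 2^T"
  obtains c' where "c' < 2^T" and "c' \<noteq> c"
    and "\<And>t. t < T \<Longrightarrow> spin t (lab c') = - spin t (lab c)"
    and "L_ham c c' = 1" and "L_ham c' c = 1"
proof -
  have lc: "length (lab c) = T" using length_lab assms by simp
  obtain c' where c': "c' < 2^T" "lab c' = map Not (lab c)"
    using lab_surj[of "map Not (lab c)"] lc by auto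
  have "c' \<noteq> c"
  proof
    assume "c' = c"
    then have "lab c ! 0 = map Not (lab c) ! 0" using c'(2) by simp
    then show False using lc T_pos by simp
  qed
  moreover have spin_c': "spin t (lab c') = - spin t (lab c)" if "t < T" for t
    using that by (simp add: c'(2) spin_def lc)
  moreover have "L_ham c c' = 1" "L_ham c' c = 1"
    using T_pos by (simp_all add: hamming_loss_spin spin_c')
  ultimately show ?thesis using that c'(1) by blast
qed

lemma calibration_attained:
  assumes "0 \<le> \<epsilon>" and "\<epsilon> \<le> 1"
  obtains f q where "f \<in> F_ham" and "q \<in> prob_simplex (2^T)"
    and "\<epsilon> \<le> excess_task_loss (2^T) L_ham F_ham f q"
    and "excess_surr_loss (2^T) (quad_surrogate (2^T) L_ham) F_ham f q = \<epsilon>\<^sup>2 / (8 * real T)"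
proof -
  obtain c1 where c1: "c1 < 2^T" "c1 \<noteq> 0"
    and spin_c1: "\<And>t. t < T \<Longrightarrow> spin t (lab c1) = - spin t (lab 0)"
    and L_opposite: "L_ham 0 c1 = 1" "L_ham c1 0 = 1"
    using complement_label[of 0] by auto
  have two_point: "(\<Sum>y<2^T. g y) = g 0 + g c1"
    if "\<And>y. y \<noteq> 0 \<Longrightarrow> y \<noteq> c1 \<Longrightarrow> g y = 0" for g :: "nat \<Rightarrow> real"
    using sum.mono_neutral_right[of "{..<2^T}" "{0, c1}" g] c1 that by auto
  define q where "q y = (if y = 0 then (1 - \<epsilon>) / 2 else if y = c1 then (1 + \<epsilon>) / 2 else 0)" for y
  define f :: "nat \<Rightarrow> real" where "f c = (if c < 2^T then - 1/2 else 0)" for c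
  have q: "q \<in> prob_simplex (2^T)"
    using assms c1(2) by (auto simp: prob_simplex_def q_def two_point add_divide_distrib[symmetric])
  have "pred (2^T) f = 0"
    unfolding pred_def by (rule Least_eq_0) (simp add: f_def)
  then have "excess_task_loss (2^T) L_ham F_ham f q
      = cond_risk (2^T) L_ham q 0 - Min (cond_risk (2^T) L_ham q ` {..<2^T})"
    using excess_task_loss_eq_cond_risk[OF _ bayes_score_in_loss_col_span] by simp
  also have "\<dots> \<ge> cond_risk (2^T) L_ham q 0 - cond_risk (2^T) L_ham q c1"
    using c1(1) by (intro diff_left_mono Min_le) auto
  also have "cond_risk (2^T) L_ham q 0 - cond_risk (2^T) L_ham q c1 = \<epsilon>"
    using c1(2) L_opposite
    by (simp add: cond_risk_def two_point q_def hamming_loss_def field_simps)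
  finally have task: "\<epsilon> \<le> excess_task_loss (2^T) L_ham F_ham f q" .
  have "risk_coeff q t = - \<epsilon> * spin t (lab 0) / (2 * real T)" if "t < T" for t
    using c1(2) by (simp add: risk_coeff_def two_point q_def spin_c1[OF that] field_simps)
  then have "(risk_coeff q t)\<^sup>2 = (\<epsilon> / (2 * real T))\<^sup>2" if "t < T" for t
    using spin_cases[of t "lab 0"] that by (auto simp: power2_eq_square)
  then have "excess_surr_loss (2^T) (quad_surrogate (2^T) L_ham) F_ham f q
      = real T * (\<epsilon> / (2 * real T))\<^sup>2 / 2"
    using excess_surr_loss_hamming[OF q, of f "- 1/2" "\<lambda>_. 0"] by (simp add: f_def)
  also have "\<dots> = \<epsilon>\<^sup>2 / (8 * real T)"
    using T_pos by (simp add: power2_eq_square)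
  finally have surr: "excess_surr_loss (2^T) (quad_surrogate (2^T) L_ham) F_ham f q = \<epsilon>\<^sup>2 / (8 * real T)" .
  have "f \<in> F_ham"
    unfolding f_def by (rule const_in_loss_col_span)
  then show ?thesis using that q task surr by blast
qed

end

theorem proposition15:
  fixes T :: nat and lab :: "nat \<Rightarrow> bool list" and \<epsilon> :: real
  assumes "T \<ge> 1"
    and "bij_betw lab {..<2^T} {xs. length xs = T}"
    and "0 \<le> \<epsilon>" and "\<epsilon> \<le> 1"
  shows "calibration_function (2^T) (quad_surrogate (2^T) (hamming_loss T lab))
           (hamming_loss T lab) (loss_col_span (2^T) (hamming_loss T lab)) \<epsilon>
         = ereal (\<epsilon>\<^sup>2 / (8 * real T))"
proof -
  interpret binary_labelling T lab
    using assms(1,2) by unfold_locales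
  obtain f q where attained: "f \<in> F_ham" "q \<in> prob_simplex (2^T)"
    "\<epsilon> \<le> excess_task_loss (2^T) L_ham F_ham f q"
    "excess_surr_loss (2^T) (quad_surrogate (2^T) L_ham) F_ham f q = \<epsilon>\<^sup>2 / (8 * real T)"
    using calibration_attained[OF assms(3,4)] by blast
  show ?thesis
    unfolding calibration_function_def using attained
    by (intro antisym[OF Inf_lower Inf_greatest])
       (force, auto intro: calibration_lower_bound[OF _ _ assms(3)])
qed

end
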